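(* Let $n\geq 1$ with $n\not\equiv 2\pmod 4$. Then for every $i\in[n]$, $\Lambda(n,i)=\Lambda(n,n-i+1)$.
   Context: $\mathcal C_n^{+-}$ is the set of cyclic permutations $\pi=\pi_1\cdots\pi_n$ of $[n]$ (those consisting of a single $n$-cycle) that are unimodal, i.e. for which there is $e\in\{0,\dots,n\}$ with $\pi_1\cdots\pi_e$ increasing and $\pi_{e+1}\cdots\pi_n$ decreasing. $\Lambda(n,i)$ is the number of $\pi\in\mathcal C_n^{+-}$ with $\pi_i=n$. *)

theory Defs
  imports "HOL-Combinatorics.Permutations"
begin

definition cyclic_perm :: "nat \<Rightarrow> (nat \<Rightarrow> nat) \<Rightarrow> bool" where
  "cyclic_perm n p \<longleftrightarrow> p permutes {1..n} \<and> (\<forall>x\<in>{1..n}. \<exists>k. (p ^^ k) 1 = x)"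

definition unimodal_perm :: "nat \<Rightarrow> (nat \<Rightarrow> nat) \<Rightarrow> bool" where
  "unimodal_perm n p \<longleftrightarrow> (\<exists>e\<le>n.
      (\<forall>i j. 1 \<le> i \<and> i < j \<and> j \<le> e \<longrightarrow> p i < p j) \<and>
      (\<forall>i j. e + 1 \<le> i \<and> i < j \<and> j \<le> n \<longrightarrow> p i > p j))"

definition C_pm :: "nat \<Rightarrow> (nat \<Rightarrow> nat) set" where
  "C_pm n = {p. cyclic_perm n p \<and> unimodal_perm n p}"

definition Lambda :: "nat \<Rightarrow> nat \<Rightarrow> nat" where
  "Lambda n i = card {p \<in> C_pm n. p i = n}"

end

theory Submission
  imports Defs
begin

text \<open>A split of a permutation f of [n] is a labelling L that is an up-set of [n] such that f
  increases off L and decreases on L. A unimodal permutation with peak k has exactly two splits,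
  {x > k} and {x >= k}, so Lambda(n,i) + Lambda(n,i+1) counts the split unimodal cycles whose
  increasing branch has i points.

  Reading the itinerary of a point (its labels along the orbit) as a binary number whose remaining
  digits are complemented after each visit to L gives a code that is monotone in the point.
  Sorting [n] by the codes of the complementary labelling turns a split unimodal cycle (p, L) into
  a split unimodal cycle conjugate to p that carries the labels not L, hence has n - i increasing
  points. Codes tie only between points half a period apart; when n is not 2 mod 4 such ties are
  broken by a parity bit. On the other hand, conjugate split unimodal cycles with matching labels
  coincide, because the codes pin down the points. So this reflection is injective, the two counts
  agree, and induction on i gives Lambda(n,i) = Lambda(n,n+1-i).\<close>

section \<open>Itinerary codes\<close>

lemma funpow_apply_funpow: "(f ^^ i) ((f ^^ j) x) = (f ^^ (i + j)) x"
  by (simp add: funpow_add)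

text \<open>The first N labels of the orbit of a, read as a binary number, most significant first,
  with all later digits complemented after every label that holds. As f reverses the order on
  the decreasing branch, this makes the code monotone along a split (itin_code_mono).\<close>

fun itin_code :: "(nat \<Rightarrow> nat) \<Rightarrow> (nat \<Rightarrow> bool) \<Rightarrow> nat \<Rightarrow> nat \<Rightarrow> nat" where
  "itin_code f L a 0 = 0"
| "itin_code f L a (Suc N) =
     (if L a then 2 ^ Suc N - 1 - itin_code f L (f a) N else itin_code f L (f a) N)"

lemma itin_code_less: "itin_code f L a N < 2 ^ N"
proof (induction N arbitrary: a)
  case (Suc N)
  have "itin_code f L (f a) N < 2 ^ N" by (rule Suc.IH)
  then show ?case by auto
qed simp

lemma itin_code_Suc_ge_iff: "2 ^ N \<le> itin_code f L a (Suc N) \<longleftrightarrow> L a"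
  using itin_code_less[of f L "f a" N] by auto

lemma itin_code_ge_iff: "0 < N \<Longrightarrow> 2 ^ (N - 1) \<le> itin_code f L a N \<longleftrightarrow> L a"
  by (cases N) (simp_all only: itin_code_Suc_ge_iff diff_Suc_1 simp_thms)

lemma complement_div_2: "c < 2 * m \<Longrightarrow> (2 * m - Suc c) div 2 = m - Suc (c div 2)"
  for c m :: nat
  by presburger

lemma itin_code_Suc_div_2: "itin_code f L a (Suc N) div 2 = itin_code f L a N"
proof (induction N arbitrary: a)
  case (Suc N)
  have "itin_code f L (f a) (Suc N) < 2 * 2 ^ Suc N"
    using itin_code_less[of f L "f a" "Suc N"] by simp
  from complement_div_2[OF this] show ?case
    using Suc.IH[of "f a"] by (simp del: itin_code.simps add: itin_code.simps(2)[of f L a])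
qed simp

lemma itin_code_less_Suc:
  "itin_code f L a N < itin_code f L b N \<Longrightarrow> itin_code f L a (Suc N) < itin_code f L b (Suc N)"
  using itin_code_Suc_div_2[of f L a N] itin_code_Suc_div_2[of f L b N] div_le_mono[of _ _ 2]
  by (metis not_le)

lemma itin_code_eq_iff:
  "itin_code f L a N = itin_code f L b N \<longleftrightarrow> (\<forall>j<N. L ((f ^^ j) a) = L ((f ^^ j) b))"
proof (induction N arbitrary: a b)
  case (Suc N)
  have shift: "(\<forall>j<Suc N. L ((f ^^ j) a) = L ((f ^^ j) b)) \<longleftrightarrow>
      L a = L b \<and> (\<forall>j<N. L ((f ^^ j) (f a)) = L ((f ^^ j) (f b)))"
    by (auto simp: funpow_Suc_right less_Suc_eq_0_disj simp del: funpow.simps)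
  show ?case
  proof (cases "L a = L b")
    case True
    then show ?thesis
      using Suc.IH[of "f a" "f b"] itin_code_less[of f L "f a" N] itin_code_less[of f L "f b" N]
      unfolding shift by auto
  next
    case False
    then show ?thesis unfolding shift
      using itin_code_Suc_ge_iff[of N f L a] itin_code_Suc_ge_iff[of N f L b] by metis
  qed
qed simp

definition unimodal_split :: "nat \<Rightarrow> (nat \<Rightarrow> nat) \<Rightarrow> (nat \<Rightarrow> bool) \<Rightarrow> bool" where
  "unimodal_split n f L \<longleftrightarrow> (\<forall>x\<in>{1..n}. \<forall>y\<in>{1..n}. x < y \<longrightarrow>
      (L x \<longrightarrow> L y) \<and> (\<not> L x \<and> \<not> L y \<longrightarrow> f x < f y) \<and> (L x \<and> L y \<longrightarrow> f y < f x))"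

lemma unimodal_split_mono:
  "unimodal_split n f L \<Longrightarrow> x \<in> {1..n} \<Longrightarrow> y \<in> {1..n} \<Longrightarrow> x < y \<Longrightarrow> L x \<Longrightarrow> L y"
  unfolding unimodal_split_def by blast

lemma unimodal_split_less_iff:
  assumes "unimodal_split n f L" "x \<in> {1..n}" "y \<in> {1..n}" "x \<noteq> y" "L x = L y"
  shows "f x < f y \<longleftrightarrow> (x < y) \<noteq> L x"
proof (cases "x < y")
  case True
  then show ?thesis using assms unfolding unimodal_split_def by fastforce
next
  case False
  then have "y < x" using assms(4) by simp
  then show ?thesis using assms unfolding unimodal_split_def by fastforce
qed

lemma itin_code_mono:
  assumes split: "unimodal_split n f L" and f_in: "\<And>x. x \<in> {1..n} \<Longrightarrow> f x \<in> {1..n}"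
  shows "x \<in> {1..n} \<Longrightarrow> y \<in> {1..n} \<Longrightarrow> x \<le> y \<Longrightarrow> itin_code f L x N \<le> itin_code f L y N"
proof (induction N arbitrary: x y)
  case (Suc N)
  show ?case
  proof (cases "x = y")
    case False
    with Suc.prems have xy: "x < y" by simp
    consider "L x = L y" | "\<not> L x" "L y"
      using unimodal_split_mono[OF split Suc.prems(1,2) xy] by blast
    then show ?thesis
    proof cases
      case 1
      then have "(f x < f y) \<noteq> L x"
        using unimodal_split_less_iff[OF split Suc.prems(1,2)] xy by simp
      then have "if L x then itin_code f L (f y) N \<le> itin_code f L (f x) N
                 else itin_code f L (f x) N \<le> itin_code f L (f y) N"
        using Suc.IH f_in Suc.prems by (auto split: if_splits)
      then show ?thesis
        using 1 itin_code_less[of f L "f x" N] itin_code_less[of f L "f y" N] by auto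
    next
      case 2
      then show ?thesis
        using itin_code_Suc_ge_iff[of N f L x] itin_code_Suc_ge_iff[of N f L y] by simp
    qed
  qed simp
qed simp

lemma itin_code_conj:
  assumes "\<And>x. x \<in> S \<Longrightarrow> f x \<in> S" "\<And>x. x \<in> S \<Longrightarrow> g (r x) = r (f x)"
    "\<And>x. x \<in> S \<Longrightarrow> M (r x) = L x"
  shows "a \<in> S \<Longrightarrow> itin_code g M (r a) N = itin_code f L a N"
  by (induction N arbitrary: a) (auto simp: assms)

fun odd_visits :: "(nat \<Rightarrow> nat) \<Rightarrow> (nat \<Rightarrow> bool) \<Rightarrow> nat \<Rightarrow> nat \<Rightarrow> bool" where
  "odd_visits f L x 0 = False"
| "odd_visits f L x (Suc k) = (odd_visits f L x k \<noteq> L ((f ^^ k) x))"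

lemma odd_visits_add:
  "odd_visits f L x (a + b) = (odd_visits f L x a \<noteq> odd_visits f L ((f ^^ a) x) b)"
  by (induction b) (auto simp: funpow_apply_funpow add.commute)

lemma odd_visits_cong:
  "(\<And>j. j < k \<Longrightarrow> L ((f ^^ j) x) = L ((f ^^ j) y)) \<Longrightarrow> odd_visits f L x k = odd_visits f L y k"
  by (induction k) auto

lemma odd_visits_Not: "odd_visits f (\<lambda>x. \<not> L x) x k = (odd_visits f L x k \<noteq> odd k)"
  by (induction k) auto

definition same_itin :: "(nat \<Rightarrow> nat) \<Rightarrow> (nat \<Rightarrow> bool) \<Rightarrow> nat \<Rightarrow> nat \<Rightarrow> bool" where
  "same_itin f L x y \<longleftrightarrow> (\<forall>j. L ((f ^^ j) x) = L ((f ^^ j) y))"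

lemma same_itin_funpow: "same_itin f L x y \<Longrightarrow> same_itin f L ((f ^^ t) x) ((f ^^ t) y)"
  unfolding same_itin_def by (simp add: funpow_apply_funpow)

lemma bij_betw_monotone_unique:
  fixes f g :: "nat \<Rightarrow> nat" and d :: bool
  defines "R \<equiv> \<lambda>u w. if d then u < w else w < u"
  assumes fin: "finite Y" and bij_f: "bij_betw f X Y" and bij_g: "bij_betw g X Y"
    and mono_f: "\<And>y z. y \<in> X \<Longrightarrow> z \<in> X \<Longrightarrow> y < z \<Longrightarrow> R (f y) (f z)"
    and mono_g: "\<And>y z. y \<in> X \<Longrightarrow> z \<in> X \<Longrightarrow> y < z \<Longrightarrow> R (g y) (g z)"
    and x: "x \<in> X"
  shows "f x = g x"
proof -
  have rank: "card {w \<in> Y. R w (h x)} = card {z \<in> X. z < x}"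
    if bij_h: "bij_betw h X Y" and mono_h: "\<And>y z. y \<in> X \<Longrightarrow> z \<in> X \<Longrightarrow> y < z \<Longrightarrow> R (h y) (h z)"
    for h
  proof -
    have "{w \<in> Y. R w (h x)} = h ` {z \<in> X. z < x}"
    proof (intro equalityI subsetI)
      fix w assume w: "w \<in> {w \<in> Y. R w (h x)}"
      then obtain z where z: "z \<in> X" "w = h z" using bij_h unfolding bij_betw_def by auto
      have "\<not> x \<le> z" using mono_h[OF x z(1)] w z unfolding R_def
        by (cases "x = z") (auto split: if_splits)
      then show "w \<in> h ` {z \<in> X. z < x}" using z by auto
    qed (use mono_h x bij_h in \<open>auto simp: bij_betw_def\<close>)
    moreover have "inj_on h {z \<in> X. z < x}"
      using bij_h unfolding bij_betw_def by (auto intro: inj_on_subset)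
    ultimately show ?thesis by (simp add: card_image)
  qed
  have rank_less: "card {w \<in> Y. R w u} < card {w \<in> Y. R w v}" if "R u v" "u \<in> Y" for u v
    by (rule psubset_card_mono) (use fin that in \<open>auto simp: R_def split: if_splits\<close>)
  have "f x \<in> Y" "g x \<in> Y" using bij_f bij_g x unfolding bij_betw_def by auto
  moreover have "R (f x) (g x) \<or> R (g x) (f x)" if "f x \<noteq> g x" using that unfolding R_def by auto
  ultimately show ?thesis
    using rank[OF bij_f mono_f] rank[OF bij_g mono_g] rank_less[of "f x" "g x"] rank_less[of "g x" "f x"]
    by fastforce
qed

lemma mono_le_iff_le_card:
  fixes F :: "nat \<Rightarrow> nat"
  assumes mono: "\<And>x y. x \<in> {1..n} \<Longrightarrow> y \<in> {1..n} \<Longrightarrow> x \<le> y \<Longrightarrow> F x \<le> F y"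
    and y: "y \<in> {1..n}"
  shows "F y \<le> v \<longleftrightarrow> y \<le> card {x \<in> {1..n}. F x \<le> v}"
proof
  assume "F y \<le> v"
  then have "{1..y} \<subseteq> {x \<in> {1..n}. F x \<le> v}" using mono y by fastforce
  then have "card {1..y} \<le> card {x \<in> {1..n}. F x \<le> v}" by (intro card_mono) auto
  then show "y \<le> card {x \<in> {1..n}. F x \<le> v}" by simp
next
  assume le: "y \<le> card {x \<in> {1..n}. F x \<le> v}"
  show "F y \<le> v"
  proof (rule ccontr)
    assume "\<not> F y \<le> v"
    then have "{x \<in> {1..n}. F x \<le> v} \<subseteq> {1..<y}"
      using mono y by (auto simp: not_le) (meson le_trans not_le)
    then have "card {x \<in> {1..n}. F x \<le> v} \<le> card {1..<y}" by (intro card_mono) auto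
    then show False using le y by auto
  qed
qed

lemma bij_betw_if_inj_on_card_le:
  assumes "finite B" "inj_on f A" "f ` A \<subseteq> B" "card B \<le> card A"
  shows "bij_betw f A B"
proof -
  have "card (f ` A) = card B" using assms card_mono card_image by (metis le_antisym)
  then have "f ` A = B" using card_subset_eq[OF assms(1,3)] by blast
  then show ?thesis using assms(2) by (simp add: bij_betw_def)
qed

lemma strict_mono_endo_fixes:
  fixes f :: "nat \<Rightarrow> nat"
  assumes "finite X" "f ` X \<subseteq> X" and mono: "\<And>y z. y \<in> X \<Longrightarrow> z \<in> X \<Longrightarrow> y < z \<Longrightarrow> f y < f z"
    and "x \<in> X"
  shows "f x = x"
proof -
  have "inj_on f X" by (rule linorder_inj_onI') (use mono in fastforce)
  then have "bij_betw f X X" using endo_inj_surj assms by (simp add: bij_betw_def)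
  then show ?thesis
    using bij_betw_monotone_unique[of X f X id True] assms bij_betw_id by simp
qed

section \<open>Cyclic permutations of [n]\<close>

locale cyclic =
  fixes n :: nat and p :: "nat \<Rightarrow> nat"
  assumes cyclic: "cyclic_perm n p" and n_pos: "1 \<le> n"
begin

lemma permutes: "p permutes {1..n}"
  using cyclic unfolding cyclic_perm_def by auto

lemma inj_funpow: "inj (p ^^ k)"
  using inj_fn permutes_inj[OF permutes] by blast

lemma funpow_in: "x \<in> {1..n} \<Longrightarrow> (p ^^ k) x \<in> {1..n}"
  using permutes_in_funpow_image[OF permutes] by blast

lemma p_in: "x \<in> {1..n} \<Longrightarrow> p x \<in> {1..n}"
  using permutes_in_image[OF permutes] by blast

lemma bij_betw_orbit: "bij_betw (\<lambda>k. (p ^^ k) 1) {..<n} {1..n}"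
  and funpow_n_1: "(p ^^ n) 1 = 1"
proof -
  define P where "P = (LEAST k. 0 < k \<and> (p ^^ k) 1 = 1)"
  have "permutation p" using permutes permutation_permutes by blast
  then obtain k where "0 < k" "(p ^^ k) 1 = 1" by (rule permutation_self)
  then have P: "0 < P" "(p ^^ P) 1 = 1"
    using LeastI[of "\<lambda>k. 0 < k \<and> (p ^^ k) 1 = 1" k] unfolding P_def by auto
  have P_min: "P \<le> k" if "0 < k" "(p ^^ k) 1 = 1" for k
    unfolding P_def by (rule Least_le) (use that in simp)
  have "inj_on (\<lambda>k. (p ^^ k) 1) {..<P}"
  proof (rule linorder_inj_onI')
    fix i j assume "i \<in> {..<P}" "j \<in> {..<P}" "i < j"
    show "(p ^^ i) 1 \<noteq> (p ^^ j) 1"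
    proof
      assume "(p ^^ i) 1 = (p ^^ j) 1"
      then have "(p ^^ i) ((p ^^ (j - i)) 1) = (p ^^ i) 1"
        using \<open>i < j\<close> by (simp add: funpow_apply_funpow)
      then have "(p ^^ (j - i)) 1 = 1" using inj_funpow by (simp add: inj_eq)
      then show False using P_min[of "j - i"] \<open>i < j\<close> \<open>j \<in> {..<P}\<close> by simp
    qed
  qed
  moreover have "(\<lambda>k. (p ^^ k) 1) ` {..<P} = {1..n}"
  proof
    show "(\<lambda>k. (p ^^ k) 1) ` {..<P} \<subseteq> {1..n}" using funpow_in[of 1] n_pos by auto
    show "{1..n} \<subseteq> (\<lambda>k. (p ^^ k) 1) ` {..<P}"
    proof
      fix x assume "x \<in> {1..n}"
      then obtain k where "(p ^^ k) 1 = x" using cyclic unfolding cyclic_perm_def by blast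
      moreover have "(p ^^ (k mod P)) 1 = (p ^^ k) 1" by (rule funpow_mod_eq[OF P(2)])
      moreover have "k mod P \<in> {..<P}" using P(1) by simp
      ultimately show "x \<in> (\<lambda>k. (p ^^ k) 1) ` {..<P}" by (metis image_eqI)
    qed
  qed
  ultimately have bij: "bij_betw (\<lambda>k. (p ^^ k) 1) {..<P} {1..n}" by (simp add: bij_betw_def)
  then have "P = n" using bij_betw_same_card by force
  with bij P(2) show "bij_betw (\<lambda>k. (p ^^ k) 1) {..<n} {1..n}" "(p ^^ n) 1 = 1" by simp_all
qed

lemma exists_funpow_1: "x \<in> {1..n} \<Longrightarrow> \<exists>s<n. (p ^^ s) 1 = x"
proof -
  assume "x \<in> {1..n}"
  then have "x \<in> (\<lambda>k. (p ^^ k) 1) ` {..<n}" using bij_betw_imp_surj_on[OF bij_betw_orbit] by simp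
  then obtain s where "s \<in> {..<n}" "x = (p ^^ s) 1" by (rule imageE)
  then show ?thesis by blast
qed

lemma funpow_eq_self_iff: "x \<in> {1..n} \<Longrightarrow> (p ^^ k) x = x \<longleftrightarrow> (p ^^ k) 1 = 1"
proof -
  assume "x \<in> {1..n}"
  then obtain s where s: "(p ^^ s) 1 = x" using exists_funpow_1 by blast
  have "(p ^^ k) x = (p ^^ s) ((p ^^ k) 1)"
    unfolding s[symmetric] funpow_apply_funpow by (simp add: add.commute)
  then show ?thesis using s inj_funpow[of s] by (auto simp: inj_eq)
qed

lemma funpow_n: "x \<in> {1..n} \<Longrightarrow> (p ^^ n) x = x"
  using funpow_eq_self_iff funpow_n_1 by blast

lemma funpow_mod: "x \<in> {1..n} \<Longrightarrow> (p ^^ (k mod n)) x = (p ^^ k) x"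
  by (rule funpow_mod_eq[OF funpow_n])

lemma dvd_if_funpow_eq_self:
  assumes "x \<in> {1..n}" "(p ^^ k) x = x"
  shows "n dvd k"
proof -
  have "(p ^^ k) 1 = 1" using assms funpow_eq_self_iff by blast
  then have "(p ^^ (k mod n)) 1 = (p ^^ 0) 1" using funpow_mod[of 1 k] n_pos by simp
  then have "k mod n = 0"
    by (rule inj_onD[OF bij_betw_imp_inj_on[OF bij_betw_orbit]]) (use n_pos in auto)
  then show ?thesis by auto
qed

lemma exists_funpow_eq: "x \<in> {1..n} \<Longrightarrow> y \<in> {1..n} \<Longrightarrow> \<exists>t<n. (p ^^ t) x = y"
proof -
  assume x: "x \<in> {1..n}" and y: "y \<in> {1..n}"
  obtain s where s: "s < n" "(p ^^ s) 1 = x" using exists_funpow_1[OF x] by blast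
  obtain u where u: "(p ^^ u) 1 = y" using exists_funpow_1[OF y] by blast
  have "u + (n - s) + s = n + u" using s(1) by simp
  then have "(p ^^ (u + (n - s))) x = (p ^^ n) ((p ^^ u) 1)"
    using s(2) by (metis funpow_apply_funpow)
  then have "(p ^^ (u + (n - s))) x = y" using funpow_n[OF y] u by simp
  then have "(p ^^ ((u + (n - s)) mod n)) x = y" using funpow_mod[OF x] by simp
  moreover have "(u + (n - s)) mod n < n" using n_pos by simp
  ultimately show ?thesis by (intro exI[of _ "(u + (n - s)) mod n"]) simp
qed

definition pos :: "nat \<Rightarrow> nat" where
  "pos = the_inv_into {..<n} (\<lambda>k. (p ^^ k) 1)"

lemma pos: "a \<in> {1..n} \<Longrightarrow> pos a < n \<and> (p ^^ pos a) 1 = a"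
  using bij_betw_the_inv_into[OF bij_betw_orbit] f_the_inv_into_f_bij_betw[OF bij_betw_orbit]
  unfolding pos_def bij_betw_def by auto

lemma pos_funpow: "k < n \<Longrightarrow> pos ((p ^^ k) 1) = k"
  using bij_betw_orbit unfolding pos_def bij_betw_def by (intro the_inv_into_f_f) auto

lemma itin_code_eq_iff_same_itin:
  assumes "x \<in> {1..n}" "y \<in> {1..n}"
  shows "itin_code p F x n = itin_code p F y n \<longleftrightarrow> same_itin p F x y"
proof -
  have "F ((p ^^ j) x) = F ((p ^^ j) y)" if "\<forall>j<n. F ((p ^^ j) x) = F ((p ^^ j) y)" for j
    using that[rule_format, of "j mod n"] funpow_mod assms n_pos by simp
  then show ?thesis unfolding itin_code_eq_iff same_itin_def by blast
qed

lemma odd_visits_period: "x \<in> {1..n} \<Longrightarrow> odd_visits p F ((p ^^ s) x) n = odd_visits p F x n"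
  using odd_visits_add[of p F x s n] odd_visits_add[of p F x n s] funpow_n[of x]
  by (auto simp: add.commute)

end

locale unimodal_cycle = cyclic +
  fixes L :: "nat \<Rightarrow> bool"
  assumes split: "unimodal_split n p L"
begin

lemma funpow_less_iff_odd_visits:
  assumes x: "x \<in> {1..n}" and y: "y \<in> {1..n}" and "x \<noteq> y" and same: "same_itin p L x y"
  shows "(p ^^ k) x < (p ^^ k) y \<longleftrightarrow> (x < y) \<noteq> odd_visits p L x k"
proof (induction k)
  case (Suc k)
  let ?u = "(p ^^ k) x" and ?v = "(p ^^ k) y"
  have "?u \<noteq> ?v" using \<open>x \<noteq> y\<close> inj_funpow[of k] by (auto simp: inj_eq)
  moreover have "L ?u = L ?v" using same unfolding same_itin_def by blast
  ultimately have "p ?u < p ?v \<longleftrightarrow> (?u < ?v) \<noteq> L ?u"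
    using unimodal_split_less_iff[OF split] funpow_in x y by blast
  then show ?case using Suc.IH by auto
qed simp

lemma funpow_less_iff_same_itin:
  assumes "y \<in> {1..n}" "z \<in> {1..n}" "y \<noteq> z" "same_itin p L y a" "same_itin p L z a"
  shows "(p ^^ t) y < (p ^^ t) z \<longleftrightarrow> (y < z) \<noteq> odd_visits p L a t"
proof -
  have "odd_visits p L y t = odd_visits p L a t"
    using assms(4) unfolding same_itin_def by (intro odd_visits_cong) auto
  moreover have "same_itin p L y z" using assms(4,5) unfolding same_itin_def by auto
  ultimately show ?thesis using funpow_less_iff_odd_visits[OF assms(1-3)] by simp
qed

text \<open>The power p^t preserves the itinerary class of a and is monotone on it, increasing iff the
  number of visits is even; an increasing such map fixes the class pointwise. So the number of
  visits is odd, p^(2t) is increasing and fixes a, and n divides 2t.\<close>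

lemma same_itin_half_period:
  assumes a: "a \<in> {1..n}" and "t < n" and ne: "(p ^^ t) a \<noteq> a"
    and same: "same_itin p L a ((p ^^ t) a)"
  shows "2 * t = n \<and> odd_visits p L a t"
proof -
  define X where "X = {y \<in> {1..n}. same_itin p L y a}"
  have X: "finite X" "X \<subseteq> {1..n}" "a \<in> X" using a unfolding X_def same_itin_def by auto
  have inv: "(p ^^ t) ` X \<subseteq> X"
  proof
    fix w assume "w \<in> (p ^^ t) ` X"
    then obtain y where "y \<in> X" "w = (p ^^ t) y" by blast
    then show "w \<in> X"
      using same_itin_funpow[of p L y a t] same funpow_in unfolding X_def same_itin_def by auto
  qed
  have dir: "(p ^^ t) y < (p ^^ t) z \<longleftrightarrow> (y < z) \<noteq> odd_visits p L a t"
    if "y \<in> X" "z \<in> X" "y \<noteq> z" for y z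
    using funpow_less_iff_same_itin[of y z a t] that unfolding X_def by simp
  have odd: "odd_visits p L a t"
  proof (rule ccontr)
    assume "\<not> odd_visits p L a t"
    then have "(p ^^ t) a = a" using strict_mono_endo_fixes[OF X(1) inv _ X(3)] dir by auto
    then show False using ne by simp
  qed
  have "(p ^^ t) ((p ^^ t) y) < (p ^^ t) ((p ^^ t) z)" if "y \<in> X" "z \<in> X" "y < z" for y z
  proof -
    have "(p ^^ t) y \<noteq> (p ^^ t) z" using \<open>y < z\<close> inj_funpow[of t] by (auto simp: inj_eq)
    then have "(p ^^ t) z < (p ^^ t) y" using dir[of y z] that odd by auto
    moreover have "(p ^^ t) y \<in> X" "(p ^^ t) z \<in> X" using inv that by auto
    moreover have "(p ^^ t) ((p ^^ t) y) \<noteq> (p ^^ t) ((p ^^ t) z)"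
      using \<open>y < z\<close> inj_funpow[of t] by (auto simp: inj_eq)
    ultimately show ?thesis using dir[of "(p ^^ t) z" "(p ^^ t) y"] odd by auto
  qed
  moreover have "(p ^^ (t + t)) ` X \<subseteq> X" using inv by (auto simp: funpow_add image_subset_iff)
  ultimately have "(p ^^ (t + t)) a = a"
    using strict_mono_endo_fixes[of X "p ^^ (t + t)" a] X by (simp add: funpow_add)
  then obtain c where c: "t + t = n * c" using dvd_if_funpow_eq_self[OF a] by (auto simp: dvd_def)
  have "0 < t" using ne by (cases t) auto
  then have "c \<noteq> 0" using c by (intro notI) simp
  moreover have "n * c < n * 2" using c \<open>t < n\<close> by linarith
  ultimately have "c = 1" by simp
  then show ?thesis using c odd by simp
qed

abbreviation code :: "nat \<Rightarrow> nat" where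
  "code x \<equiv> itin_code p L x n"

lemma code_mono: "x \<in> {1..n} \<Longrightarrow> y \<in> {1..n} \<Longrightarrow> x \<le> y \<Longrightarrow> code x \<le> code y"
  by (rule itin_code_mono[OF split p_in])

lemma code_ge_iff: "2 ^ (n - 1) \<le> code x \<longleftrightarrow> L x"
  using itin_code_ge_iff n_pos by simp

lemma code_p_eq: "x \<in> {1..n} \<Longrightarrow> y \<in> {1..n} \<Longrightarrow> code x = code y \<Longrightarrow> code (p x) = code (p y)"
  using itin_code_eq_iff_same_itin same_itin_funpow[of p L x y 1] p_in by simp

definition code_class :: "nat \<Rightarrow> nat set" where
  "code_class x = {y \<in> {1..n}. code y = code x}"

lemma funpow_code_class:
  assumes "x \<in> {1..n}"
  shows "(p ^^ k) ` code_class x \<subseteq> code_class ((p ^^ k) x)"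
proof
  fix w assume "w \<in> (p ^^ k) ` code_class x"
  then obtain y where y: "y \<in> {1..n}" "code y = code x" "w = (p ^^ k) y"
    unfolding code_class_def by auto
  then have "same_itin p L ((p ^^ k) y) ((p ^^ k) x)"
    using assms itin_code_eq_iff_same_itin same_itin_funpow by blast
  then show "w \<in> code_class ((p ^^ k) x)"
    using y assms funpow_in itin_code_eq_iff_same_itin unfolding code_class_def by auto
qed

lemma bij_betw_code_class:
  assumes x: "x \<in> {1..n}"
  shows "bij_betw p (code_class x) (code_class (p x))"
proof (rule bij_betw_if_inj_on_card_le)
  show "p ` code_class x \<subseteq> code_class (p x)" using funpow_code_class[OF x, of 1] by simp
  have "(p ^^ (n - 1)) ((p ^^ 1) x) = (p ^^ (n - 1 + 1)) x" by (rule funpow_apply_funpow)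
  then have "(p ^^ (n - 1)) ((p ^^ 1) x) = (p ^^ n) x" using n_pos by simp
  then have "(p ^^ (n - 1)) ` code_class (p x) \<subseteq> code_class x"
    using funpow_code_class[of "p x" "n - 1"] p_in[OF x] funpow_n[OF x] by simp
  then show "card (code_class (p x)) \<le> card (code_class x)"
    using inj_funpow unfolding code_class_def by (intro card_inj_on_le) (auto intro: inj_on_subset)
qed (use permutes_inj_on[OF permutes] in \<open>auto simp: code_class_def\<close>)

end

section \<open>Rigidity: conjugate split cycles with matching labels coincide\<close>

locale unimodal_conjugate = unimodal_cycle +
  fixes q :: "nat \<Rightarrow> nat" and M :: "nat \<Rightarrow> bool" and r :: "nat \<Rightarrow> nat"
  assumes q_permutes: "q permutes {1..n}" and q_split: "unimodal_split n q M"
    and r_bij: "bij_betw r {1..n} {1..n}"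
    and conj: "\<And>a. a \<in> {1..n} \<Longrightarrow> q (r a) = r (p a)"
    and label: "\<And>a. a \<in> {1..n} \<Longrightarrow> M (r a) = L a"
begin

lemma q_in: "x \<in> {1..n} \<Longrightarrow> q x \<in> {1..n}"
  using permutes_in_image[OF q_permutes] by blast

lemma r_in: "a \<in> {1..n} \<Longrightarrow> r a \<in> {1..n}"
  using r_bij unfolding bij_betw_def by auto

lemma code_q_r: "a \<in> {1..n} \<Longrightarrow> itin_code q M (r a) n = code a"
  by (rule itin_code_conj[of "{1..n}" p q r M L]) (use p_in conj label in blast)+

text \<open>Both codes are monotone and take the same values with the same multiplicities,
  so they agree pointwise.\<close>

lemma code_q_eq_code: "y \<in> {1..n} \<Longrightarrow> itin_code q M y n = code y"
proof -
  assume y: "y \<in> {1..n}"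
  have count: "card {x \<in> {1..n}. code x \<le> v} = card {y \<in> {1..n}. itin_code q M y n \<le> v}" for v
  proof -
    have "r ` {x \<in> {1..n}. code x \<le> v} = {y \<in> {1..n}. itin_code q M y n \<le> v}"
    proof (intro equalityI subsetI)
      fix y assume y: "y \<in> {y \<in> {1..n}. itin_code q M y n \<le> v}"
      then have "y \<in> r ` {1..n}" using r_bij by (simp add: bij_betw_def)
      then obtain z where "z \<in> {1..n}" "y = r z" by blast
      then show "y \<in> r ` {x \<in> {1..n}. code x \<le> v}" using y code_q_r by auto
    qed (use code_q_r r_in in auto)
    moreover have "inj_on r {x \<in> {1..n}. code x \<le> v}"
      using r_bij unfolding bij_betw_def by (auto intro: inj_on_subset)
    ultimately show ?thesis using card_image[of r "{x \<in> {1..n}. code x \<le> v}"] by simp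
  qed
  have le_iff: "itin_code q M y n \<le> v \<longleftrightarrow> code y \<le> v" for v
    using mono_le_iff_le_card[of n "\<lambda>x. itin_code q M x n", OF itin_code_mono[OF q_split q_in] y]
      mono_le_iff_le_card[of n code, OF code_mono y] count[of v]
    by simp
  show ?thesis using le_iff[of "code y"] le_iff[of "itin_code q M y n"] by simp
qed

lemma M_eq_L: "y \<in> {1..n} \<Longrightarrow> M y = L y"
  using code_q_eq_code itin_code_ge_iff[of n q M y] code_ge_iff n_pos by simp

lemma code_q_eq_code_p: "x \<in> {1..n} \<Longrightarrow> code (q x) = code (p x)"
proof -
  assume x: "x \<in> {1..n}"
  have "x \<in> r ` {1..n}" using r_bij x by (simp add: bij_betw_def)
  then obtain z where z: "z \<in> {1..n}" "x = r z" by blast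
  have "code z = code x" using code_q_r[OF z(1)] code_q_eq_code[OF r_in[OF z(1)]] z(2) by simp
  then have "code (p z) = code (p x)" using code_p_eq z(1) x by blast
  moreover have "code (q x) = code (p z)"
    using code_q_eq_code[OF q_in[OF x]] code_q_r[OF p_in[OF z(1)]] conj[OF z(1)] z(2) by simp
  ultimately show ?thesis by simp
qed

lemma in_code_class:
  "y \<in> code_class x \<Longrightarrow> y \<in> {1..n} \<and> L y = L x \<and> M y = L x"
  using code_ge_iff[of y] code_ge_iff[of x] M_eq_L unfolding code_class_def by auto

lemma bij_betw_q_code_class:
  assumes x: "x \<in> {1..n}"
  shows "bij_betw q (code_class x) (code_class (p x))"
proof (rule bij_betw_if_inj_on_card_le)
  show "finite (code_class (p x))" unfolding code_class_def by simp
  show "inj_on q (code_class x)" using permutes_inj_on[OF q_permutes] .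
  show "q ` code_class x \<subseteq> code_class (p x)"
  proof
    fix w assume "w \<in> q ` code_class x"
    then obtain y where y: "y \<in> code_class x" "w = q y" by blast
    then have "code (q y) = code (p y)" using code_q_eq_code_p in_code_class by blast
    moreover have "code (p y) = code (p x)"
      using code_p_eq in_code_class[OF y(1)] y(1) x unfolding code_class_def by blast
    ultimately show "w \<in> code_class (p x)" using y q_in in_code_class unfolding code_class_def by auto
  qed
  show "card (code_class (p x)) \<le> card (code_class x)"
    using bij_betw_same_card[OF bij_betw_code_class[OF x]] by simp
qed

text \<open>Both p and q map the code class of x onto that of p x, monotonically in the same
  direction.\<close>

lemma q_eq_p: "x \<in> {1..n} \<Longrightarrow> q x = p x"
proof -
  assume x: "x \<in> {1..n}"
  have mono_p: "if \<not> L x then p y < p z else p z < p y"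
    if "y \<in> code_class x" "z \<in> code_class x" "y < z" for y z
    using unimodal_split_less_iff[OF split, of y z] unimodal_split_less_iff[OF split, of z y]
      in_code_class[OF that(1)] in_code_class[OF that(2)] that(3) by auto
  have mono_q: "if \<not> L x then q y < q z else q z < q y"
    if "y \<in> code_class x" "z \<in> code_class x" "y < z" for y z
    using unimodal_split_less_iff[OF q_split, of y z] unimodal_split_less_iff[OF q_split, of z y]
      in_code_class[OF that(1)] in_code_class[OF that(2)] that(3) by auto
  have "x \<in> code_class x" using x unfolding code_class_def by simp
  then show ?thesis
    using bij_betw_monotone_unique[of "code_class (p x)" q "code_class x" p "\<not> L x",
        OF _ bij_betw_q_code_class[OF x] bij_betw_code_class[OF x] mono_q mono_p]
    unfolding code_class_def by simp
qed

end

section \<open>Reflection of split cycles\<close>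

text \<open>The reflected cycle lists the points in the order of their codes for the complementary
  labelling. Such codes tie only half a period apart (same_itin_half_period), and when n is not
  2 mod 4 the two points then differ in the parity of the number of complementary visits along
  the orbit from 1, which breaks the tie.\<close>

locale unimodal_reflection = unimodal_cycle +
  assumes n_mod_4: "n mod 4 \<noteq> 2"
begin

abbreviation rcode :: "nat \<Rightarrow> nat" where
  "rcode a \<equiv> itin_code p (\<lambda>x. \<not> L x) a n"

definition parity :: "nat \<Rightarrow> bool" where
  "parity a = odd_visits p (\<lambda>x. \<not> L x) 1 (pos a)"

definition key :: "nat \<Rightarrow> nat" where
  "key a = 2 * rcode a + (if parity a then 1 else 0)"

lemma rcode_eq_iff: "x \<in> {1..n} \<Longrightarrow> y \<in> {1..n} \<Longrightarrow> rcode x = rcode y \<longleftrightarrow> same_itin p L x y"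
  using itin_code_eq_iff_same_itin unfolding same_itin_def by simp

lemma rcode_tie:
  assumes "a \<in> {1..n}" "b \<in> {1..n}" "a \<noteq> b" "rcode a = rcode b" "t < n" "(p ^^ t) a = b"
  shows "2 * t = n \<and> odd_visits p L a t"
  using same_itin_half_period[of a t] rcode_eq_iff assms by auto

lemma parity_tie:
  assumes a: "a \<in> {1..n}" and b: "b \<in> {1..n}" and ne: "a \<noteq> b" and eq: "rcode a = rcode b"
    and less: "pos a < pos b"
  shows "parity a \<noteq> parity b"
proof -
  define d where "d = pos b - pos a"
  have "(p ^^ d) a = (p ^^ (d + pos a)) 1" using pos[OF a] funpow_apply_funpow by metis
  then have "(p ^^ d) a = b" using pos[OF b] less unfolding d_def by simp
  moreover have "d < n" using pos[OF b] unfolding d_def by (simp add: less_imp_diff_less)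
  ultimately have d: "2 * d = n" "odd_visits p L a d" using rcode_tie[OF a b ne eq] by auto
  then have "even d" using n_mod_4 by presburger
  then have "odd_visits p (\<lambda>x. \<not> L x) a d" using odd_visits_Not[of p L a d] d by simp
  moreover have "parity b = (parity a \<noteq> odd_visits p (\<lambda>x. \<not> L x) a d)"
    using odd_visits_add[of p "\<lambda>x. \<not> L x" 1 "pos a" d] pos[OF a] less
    unfolding parity_def d_def by simp
  ultimately show ?thesis by simp
qed

lemma key_inj: "inj_on key {1..n}"
proof (rule inj_onI)
  fix a b assume a: "a \<in> {1..n}" and b: "b \<in> {1..n}" and "key a = key b"
  then have eq: "rcode a = rcode b" "parity a = parity b"
    unfolding key_def by (auto split: if_splits; presburger)+
  show "a = b"
  proof (rule ccontr)
    assume ne: "a \<noteq> b"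
    then have "pos a \<noteq> pos b" using pos[OF a] pos[OF b] by metis
    then show False
      using parity_tie[OF a b ne eq(1)] parity_tie[OF b a ne[symmetric] eq(1)[symmetric]] eq(2)
      by linarith
  qed
qed

lemma rcode_tie_even_visits:
  assumes a: "a \<in> {1..n}" and b: "b \<in> {1..n}" and ne: "a \<noteq> b" and eq: "rcode a = rcode b"
  shows "\<not> odd_visits p (\<lambda>x. \<not> L x) a n"
proof -
  obtain t where t: "t < n" "(p ^^ t) a = b" using exists_funpow_eq[OF a b] by blast
  have "t + t = n" using rcode_tie[OF a b ne eq t] by simp
  moreover have "same_itin p L a ((p ^^ t) a)" using rcode_eq_iff[OF a b] eq t by simp
  then have "odd_visits p (\<lambda>x. \<not> L x) ((p ^^ t) a) t = odd_visits p (\<lambda>x. \<not> L x) a t"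
    unfolding same_itin_def by (intro odd_visits_cong) auto
  ultimately show ?thesis using odd_visits_add[of p "\<lambda>x. \<not> L x" a t t] by simp
qed

text \<open>The parity restarts when the orbit returns to 1; at a tie this is harmless, because the
  parity over a full period is then even (rcode_tie_even_visits).\<close>

lemma parity_p:
  assumes a: "a \<in> {1..n}" and b: "b \<in> {1..n}" and ne: "a \<noteq> b" and eq: "rcode a = rcode b"
  shows "parity (p a) = (parity a = L a)"
proof -
  have pa: "p a = (p ^^ Suc (pos a)) 1" using pos[OF a] by simp
  have step: "odd_visits p (\<lambda>x. \<not> L x) 1 (Suc (pos a)) = (parity a = L a)"
    unfolding parity_def using pos[OF a] by simp
  show ?thesis
  proof (cases "Suc (pos a) < n")
    case True
    then have "pos (p a) = Suc (pos a)" using pos_funpow pa by metis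
    then show ?thesis using step unfolding parity_def by simp
  next
    case False
    then have n_eq: "Suc (pos a) = n" using pos[OF a] by simp
    then have "p a = 1" using pa funpow_n_1 by simp
    then have "\<not> parity (p a)" using pos_funpow[of 0] n_pos unfolding parity_def by simp
    moreover have "\<not> odd_visits p (\<lambda>x. \<not> L x) 1 n"
      using odd_visits_period[where x = 1 and s = "pos a"] pos[OF a]
        rcode_tie_even_visits[OF a b ne eq] n_pos
      by simp
    ultimately show ?thesis using step n_eq by simp
  qed
qed

lemma key_p_less:
  assumes a: "a \<in> {1..n}" and b: "b \<in> {1..n}" and less: "key a < key b" and "L a = L b"
  shows "if L a then key (p a) < key (p b) else key (p b) < key (p a)"
proof -
  have "rcode a \<le> rcode b" using less unfolding key_def by (auto split: if_splits)
  then consider "rcode a < rcode b" | "rcode a = rcode b" by linarith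
  then show ?thesis
  proof cases
    case 1
    then have "itin_code p (\<lambda>x. \<not> L x) a (Suc n) < itin_code p (\<lambda>x. \<not> L x) b (Suc n)"
      by (rule itin_code_less_Suc)
    then have "if L a then rcode (p a) < rcode (p b) else rcode (p b) < rcode (p a)"
      using \<open>L a = L b\<close> itin_code_less[of p "\<lambda>x. \<not> L x" "p a" n]
        itin_code_less[of p "\<lambda>x. \<not> L x" "p b" n]
      by (auto split: if_splits)
    then show ?thesis unfolding key_def by (auto split: if_splits)
  next
    case 2
    have par: "\<not> parity a" "parity b" using less 2 unfolding key_def by (auto split: if_splits)
    then have ne: "a \<noteq> b" by auto
    have "rcode (p a) = rcode (p b)"
      using 2 rcode_eq_iff a b p_in same_itin_funpow[of p L a b 1] by simp
    moreover have "parity (p a) = (parity a = L a)" by (rule parity_p[OF a b ne 2])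
    moreover have "parity (p b) = (parity b = L b)"
      by (rule parity_p[OF b a ne[symmetric] 2[symmetric]])
    ultimately show ?thesis using par \<open>L a = L b\<close> unfolding key_def by auto
  qed
qed

definition rank :: "nat \<Rightarrow> nat" where
  "rank a = Suc (card {b \<in> {1..n}. key b < key a})"

lemma rank_less: "a \<in> {1..n} \<Longrightarrow> key a < key b \<Longrightarrow> rank a < rank b"
proof -
  assume "a \<in> {1..n}" "key a < key b"
  then have "{c \<in> {1..n}. key c < key a} \<subset> {c \<in> {1..n}. key c < key b}" by auto
  then show ?thesis unfolding rank_def by (simp add: psubset_card_mono)
qed

lemma rank_less_iff:
  assumes a: "a \<in> {1..n}" and b: "b \<in> {1..n}"
  shows "rank a < rank b \<longleftrightarrow> key a < key b"
proof
  assume less: "rank a < rank b"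
  then have "\<not> key b < key a" using rank_less[OF b] by fastforce
  moreover have "key a \<noteq> key b" using less inj_onD[OF key_inj _ a b] by fastforce
  ultimately show "key a < key b" by simp
qed (rule rank_less[OF a])

lemma bij_rank: "bij_betw rank {1..n} {1..n}"
proof (rule bij_betw_if_inj_on_card_le)
  show "inj_on rank {1..n}"
  proof (rule linorder_inj_onI')
    fix a b assume "a \<in> {1..n}" "b \<in> {1..n}" "a < b"
    then have "key a \<noteq> key b" using inj_onD[OF key_inj] by fastforce
    then show "rank a \<noteq> rank b" using rank_less_iff \<open>a \<in> {1..n}\<close> \<open>b \<in> {1..n}\<close>
      by (metis less_irrefl linorder_neqE_nat)
  qed
  show "rank ` {1..n} \<subseteq> {1..n}"
  proof
    fix y assume "y \<in> rank ` {1..n}"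
    then obtain a where a: "a \<in> {1..n}" "y = rank a" by blast
    have "card {c \<in> {1..n}. key c < key a} \<le> card ({1..n} - {a})" by (intro card_mono) auto
    moreover have "card ({1..n} - {a}) = n - 1" using a(1) by simp
    ultimately show "y \<in> {1..n}" using a unfolding rank_def by auto
  qed
qed simp_all

definition unrank :: "nat \<Rightarrow> nat" where
  "unrank = the_inv_into {1..n} rank"

lemma unrank: "y \<in> {1..n} \<Longrightarrow> unrank y \<in> {1..n} \<and> rank (unrank y) = y"
  using bij_betw_the_inv_into[OF bij_rank] f_the_inv_into_f_bij_betw[OF bij_rank]
  unfolding unrank_def bij_betw_def by auto

lemma unrank_rank: "a \<in> {1..n} \<Longrightarrow> unrank (rank a) = a"
  unfolding unrank_def using bij_rank by (simp add: bij_betw_def the_inv_into_f_f)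

definition rperm :: "nat \<Rightarrow> nat" where
  "rperm y = (if y \<in> {1..n} then rank (p (unrank y)) else y)"

definition rlabel :: "nat \<Rightarrow> bool" where
  "rlabel y \<longleftrightarrow> \<not> L (unrank y)"

lemma rperm_rank: "a \<in> {1..n} \<Longrightarrow> rperm (rank a) = rank (p a)"
  unfolding rperm_def using bij_rank unrank_rank by (auto simp: bij_betw_def)

lemma rlabel_rank: "a \<in> {1..n} \<Longrightarrow> rlabel (rank a) \<longleftrightarrow> \<not> L a"
  unfolding rlabel_def using unrank_rank by simp

lemma rperm_permutes: "rperm permutes {1..n}"
proof (rule bij_imp_permutes)
  have "bij_betw (rank \<circ> p \<circ> unrank) {1..n} {1..n}"
    using bij_rank bij_betw_the_inv_into[OF bij_rank] permutes_imp_bij[OF permutes]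
    unfolding unrank_def by (blast intro: bij_betw_trans)
  then show "bij_betw rperm {1..n} {1..n}"
    using bij_betw_cong[of "{1..n}" rperm "rank \<circ> p \<circ> unrank" "{1..n}"] by (simp add: rperm_def)
qed (simp only: rperm_def if_not_P if_False)

lemma rperm_split: "unimodal_split n rperm rlabel"
  unfolding unimodal_split_def
proof (intro ballI impI conjI)
  fix y z assume y: "y \<in> {1..n}" and z: "z \<in> {1..n}" and "y < z"
  obtain a b where a: "a \<in> {1..n}" "y = rank a" and b: "b \<in> {1..n}" "z = rank b"
    by (rule that[of "unrank y" "unrank z"]) (use unrank[OF y] unrank[OF z] in auto)
  have less: "key a < key b" using rank_less_iff[OF a(1) b(1)] \<open>y < z\<close> a b by simp
  then have "rcode a \<le> rcode b" unfolding key_def by (auto split: if_splits)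
  moreover have "2 ^ (n - 1) \<le> rcode x \<longleftrightarrow> \<not> L x" for x
    using itin_code_ge_iff[of n p "\<lambda>x. \<not> L x" x] n_pos by simp
  ultimately have up: "\<not> L a \<Longrightarrow> \<not> L b" by (meson le_trans)
  have rperm: "rperm y = rank (p a)" "rperm z = rank (p b)" using rperm_rank a b by simp_all
  have p_ab: "p a \<in> {1..n}" "p b \<in> {1..n}" using p_in a(1) b(1) by simp_all
  show "rlabel y \<Longrightarrow> rlabel z" using up rlabel_rank a b by simp
  show "\<not> rlabel y \<and> \<not> rlabel z \<Longrightarrow> rperm y < rperm z"
    using key_p_less[OF a(1) b(1) less] rank_less[OF p_ab(1)] rlabel_rank a b rperm by simp
  show "rlabel y \<and> rlabel z \<Longrightarrow> rperm z < rperm y"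
    using key_p_less[OF a(1) b(1) less] rank_less[OF p_ab(2)] rlabel_rank a b rperm by simp
qed

lemma rperm_funpow:
  assumes "a \<in> {1..n}"
  shows "(rperm ^^ k) (rank a) = rank ((p ^^ k) a)"
  using rperm_rank[OF funpow_in[OF assms]] by (induction k) simp_all

lemma rperm_cyclic: "cyclic_perm n rperm"
  unfolding cyclic_perm_def
proof (intro conjI ballI)
  fix x assume x: "x \<in> {1..n}"
  obtain a0 where a0: "a0 \<in> {1..n}" "rank a0 = 1" using unrank[of 1] n_pos by auto
  obtain t where "(p ^^ t) a0 = unrank x" using exists_funpow_eq[OF a0(1)] unrank[OF x] by blast
  then show "\<exists>k. (rperm ^^ k) 1 = x" using rperm_funpow[OF a0(1), of t] a0(2) unrank[OF x] by metis
qed (rule rperm_permutes)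

lemma exists_reflected_cycle:
  "\<exists>q M r. cyclic_perm n q \<and> unimodal_split n q M \<and> bij_betw r {1..n} {1..n} \<and>
     (\<forall>a\<in>{1..n}. q (r a) = r (p a)) \<and> (\<forall>a\<in>{1..n}. M (r a) \<longleftrightarrow> \<not> L a)"
  using rperm_cyclic rperm_split bij_rank rperm_rank rlabel_rank by blast

end

section \<open>Counting\<close>

definition peak :: "nat \<Rightarrow> (nat \<Rightarrow> nat) \<Rightarrow> nat" where
  "peak n f = (THE x. x \<in> {1..n} \<and> f x = n)"

lemma peak:
  assumes f: "f permutes {1..n}" and "1 \<le> n"
  shows "peak n f \<in> {1..n}" "f (peak n f) = n"
    and "x \<in> {1..n} \<Longrightarrow> f x = n \<Longrightarrow> x = peak n f"
proof -
  have "n \<in> f ` {1..n}" using permutes_image[OF f] \<open>1 \<le> n\<close> by simp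
  then obtain x0 where x0: "x0 \<in> {1..n}" "f x0 = n" by blast
  have uniq: "x = x0" if "f x = n" for x
  proof -
    have "f x = f x0" using that x0(2) by simp
    then show ?thesis by (rule injD[OF permutes_inj[OF f]])
  qed
  have "peak n f = x0" unfolding peak_def
  proof (rule the_equality)
    show "x0 \<in> {1..n} \<and> f x0 = n" using x0 by simp
    show "x = x0" if "x \<in> {1..n} \<and> f x = n" for x using uniq that by blast
  qed
  with x0 show "peak n f \<in> {1..n}" "f (peak n f) = n" by simp_all
  show "x \<in> {1..n} \<Longrightarrow> f x = n \<Longrightarrow> x = peak n f" using uniq \<open>peak n f = x0\<close> by blast
qed

definition peak_split :: "nat \<Rightarrow> (nat \<Rightarrow> nat) \<Rightarrow> bool \<Rightarrow> nat \<Rightarrow> bool" where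
  "peak_split n f c x \<longleftrightarrow> peak n f < x \<or> (x = peak n f \<and> c)"

lemma C_pm_permutes: "f \<in> C_pm n \<Longrightarrow> f permutes {1..n}"
  unfolding C_pm_def cyclic_perm_def by auto

lemma finite_C_pm: "finite (C_pm n)"
proof -
  have "C_pm n \<subseteq> {f. f permutes {1..n}}" using C_pm_permutes by blast
  then show ?thesis using finite_permutations[of "{1..n}"] finite_subset by blast
qed

lemma C_pm_mono_around_peak:
  assumes C: "f \<in> C_pm n" and n_pos: "1 \<le> n"
  shows "\<And>i j. 1 \<le> i \<Longrightarrow> i < j \<Longrightarrow> j \<le> peak n f \<Longrightarrow> f i < f j"
    and "\<And>i j. peak n f \<le> i \<Longrightarrow> i < j \<Longrightarrow> j \<le> n \<Longrightarrow> f j < f i"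
proof -
  have f: "f permutes {1..n}" by (rule C_pm_permutes[OF C])
  obtain e where inc: "\<And>i j. 1 \<le> i \<Longrightarrow> i < j \<Longrightarrow> j \<le> e \<Longrightarrow> f i < f j"
    and dec: "\<And>i j. e + 1 \<le> i \<Longrightarrow> i < j \<Longrightarrow> j \<le> n \<Longrightarrow> f i > f j"
    using C unfolding C_pm_def unimodal_perm_def by blast
  define k where "k = peak n f"
  have k: "k \<in> {1..n}" "f k = n" using peak(1,2)[OF f n_pos] unfolding k_def by auto
  have ne: "f x \<noteq> n" if "x \<in> {1..n}" "x \<noteq> k" for x using peak(3)[OF f n_pos] that k_def by blast
  have le: "f x \<le> n" if "x \<in> {1..n}" for x
    using permutes_in_image[OF f] that by (meson atLeastAtMost_iff)
  show "f i < f j" if "1 \<le> i" "i < j" "j \<le> peak n f" for i j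
  proof (cases "j \<le> e")
    case False
    have "j = k"
    proof (rule ccontr)
      assume "j \<noteq> k"
      then have "f k < f j" using dec[of j k] False that k unfolding k_def by simp
      then show False using k le[of j] that unfolding k_def by simp
    qed
    moreover have "i \<in> {1..n}" "i \<noteq> k" using that k unfolding k_def by auto
    ultimately show ?thesis using ne[of i] le[of i] k by (simp add: order_less_le)
  qed (use inc that in simp)
  show "f j < f i" if "peak n f \<le> i" "i < j" "j \<le> n" for i j
  proof (cases "e + 1 \<le> i")
    case False
    have "i = k"
    proof (rule ccontr)
      assume "i \<noteq> k"
      then have "f k < f i" using inc[of k i] False that k unfolding k_def by simp
      then show False using k le[of i] that unfolding k_def by simp
    qed
    moreover have "j \<in> {1..n}" "j \<noteq> k" using that k unfolding k_def by auto
    ultimately show ?thesis using ne[of j] le[of j] k by (simp add: order_less_le)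
  qed (use dec that in simp)
qed

lemma unimodal_split_peak_split:
  assumes C: "f \<in> C_pm n" and n_pos: "1 \<le> n"
  shows "unimodal_split n f (peak_split n f c)"
  unfolding unimodal_split_def peak_split_def
proof (intro ballI impI conjI)
  fix x y assume x: "x \<in> {1..n}" and y: "y \<in> {1..n}" and "x < y"
  show "peak n f < x \<or> x = peak n f \<and> c \<Longrightarrow> peak n f < y \<or> y = peak n f \<and> c"
    using \<open>x < y\<close> by auto
  show "\<not> (peak n f < x \<or> x = peak n f \<and> c) \<and> \<not> (peak n f < y \<or> y = peak n f \<and> c) \<Longrightarrow> f x < f y"
    using C_pm_mono_around_peak(1)[OF C n_pos, of x y] x \<open>x < y\<close> by auto
  show "(peak n f < x \<or> x = peak n f \<and> c) \<and> (peak n f < y \<or> y = peak n f \<and> c) \<Longrightarrow> f y < f x"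
    using C_pm_mono_around_peak(2)[OF C n_pos, of x y] y \<open>x < y\<close> by auto
qed

lemma unimodal_split_eq_peak_split:
  assumes f: "f permutes {1..n}" and n_pos: "1 \<le> n" and split: "unimodal_split n f M"
    and x: "x \<in> {1..n}"
  shows "M x = peak_split n f (M (peak n f)) x"
proof -
  define k where "k = peak n f"
  have k: "k \<in> {1..n}" "f k = n" using peak(1,2)[OF f n_pos] unfolding k_def by auto
  have "f x \<le> n" using permutes_in_image[OF f] x by (meson atLeastAtMost_iff)
  then have "x < k \<Longrightarrow> \<not> M x" "k < x \<Longrightarrow> M x"
    using split x k unfolding unimodal_split_def by fastforce+
  then show ?thesis unfolding peak_split_def k_def[symmetric]
    by (cases x k rule: linorder_cases) auto
qed

lemma unimodal_split_imp_C_pm: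
  assumes cyc: "cyclic_perm n f" and n_pos: "1 \<le> n" and split: "unimodal_split n f M"
  shows "f \<in> C_pm n"
proof -
  have f: "f permutes {1..n}" using cyc unfolding cyclic_perm_def by simp
  define k where "k = peak n f"
  define e where "e = (if M k then k - 1 else k)"
  have "1 \<le> k" using peak(1)[OF f n_pos] unfolding k_def by simp
  then have low_iff: "\<not> M x \<longleftrightarrow> x \<le> e" if "x \<in> {1..n}" for x
    using unimodal_split_eq_peak_split[OF f n_pos split that]
    unfolding peak_split_def e_def k_def[symmetric] by auto
  have split_at: "(\<not> M x \<and> \<not> M y \<longrightarrow> f x < f y) \<and> (M x \<and> M y \<longrightarrow> f y < f x)"
    if "x \<in> {1..n}" "y \<in> {1..n}" "x < y" for x y
    using split that unfolding unimodal_split_def by blast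
  have "unimodal_perm n f" unfolding unimodal_perm_def
  proof (intro exI[of _ e] conjI allI impI)
    show "e \<le> n" using peak(1)[OF f n_pos] unfolding e_def k_def by auto
    fix i j assume ij: "1 \<le> i \<and> i < j \<and> j \<le> e"
    then have "i \<in> {1..n}" "j \<in> {1..n}" using \<open>e \<le> n\<close> by auto
    then show "f i < f j" using split_at[of i j] low_iff[of i] low_iff[of j] ij by auto
  next
    fix i j assume ij: "e + 1 \<le> i \<and> i < j \<and> j \<le> n"
    then have "i \<in> {1..n}" "j \<in> {1..n}" by auto
    then show "f j < f i" using split_at[of i j] low_iff[of i] low_iff[of j] ij by auto
  qed
  then show "f \<in> C_pm n" using cyc unfolding C_pm_def by simp
qed

lemma Lambda_eq_card_peak:
  assumes n_pos: "1 \<le> n"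
  shows "Lambda n i = card {f \<in> C_pm n. peak n f = i}"
proof -
  have "f i = n \<longleftrightarrow> peak n f = i" if C: "f \<in> C_pm n" for f
  proof
    assume fi: "f i = n"
    have "i \<in> {1..n}"
    proof (rule ccontr)
      assume i: "i \<notin> {1..n}"
      then have "f i = i" by (rule permutes_not_in[OF C_pm_permutes[OF C]])
      then show False using fi i n_pos by simp
    qed
    then have "i = peak n f" using peak(3)[OF C_pm_permutes[OF C] n_pos] fi by blast
    then show "peak n f = i" by simp
  next
    assume "peak n f = i"
    then show "f i = n" using peak(2)[OF C_pm_permutes[OF C] n_pos] by simp
  qed
  then have "{f \<in> C_pm n. f i = n} = {f \<in> C_pm n. peak n f = i}" by blast
  then show ?thesis unfolding Lambda_def by simp
qed

definition split_pairs :: "nat \<Rightarrow> nat \<Rightarrow> ((nat \<Rightarrow> nat) \<times> bool) set" where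
  "split_pairs n j = {(f, c). f \<in> C_pm n \<and> card {x \<in> {1..n}. \<not> peak_split n f c x} = j}"

lemma card_not_peak_split:
  assumes "f \<in> C_pm n" "1 \<le> n"
  shows "card {x \<in> {1..n}. \<not> peak_split n f c x} = (if c then peak n f - 1 else peak n f)"
proof -
  have "peak n f \<in> {1..n}" using peak(1)[OF C_pm_permutes] assms by blast
  then have "{x \<in> {1..n}. \<not> peak_split n f c x} = (if c then {1..<peak n f} else {1..peak n f})"
    unfolding peak_split_def by auto
  then show ?thesis by simp
qed

lemma card_split_pairs:
  assumes n_pos: "1 \<le> n"
  shows "card (split_pairs n j) = Lambda n j + Lambda n (Suc j)"
proof -
  have "split_pairs n j =
      {f \<in> C_pm n. peak n f = j} \<times> {False} \<union> {f \<in> C_pm n. peak n f = Suc j} \<times> {True}"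
  proof (intro set_eqI iffI)
    fix z assume "z \<in> split_pairs n j"
    then obtain f c where "z = (f, c)" "f \<in> C_pm n"
      "card {x \<in> {1..n}. \<not> peak_split n f c x} = j"
      unfolding split_pairs_def by blast
    moreover have "1 \<le> peak n f" using peak(1)[OF C_pm_permutes[OF \<open>f \<in> C_pm n\<close>] n_pos] by simp
    ultimately show "z \<in> {f \<in> C_pm n. peak n f = j} \<times> {False} \<union> {f \<in> C_pm n. peak n f = Suc j} \<times> {True}"
      using card_not_peak_split[of f n c] n_pos by (cases c) auto
  next
    fix z assume "z \<in> {f \<in> C_pm n. peak n f = j} \<times> {False} \<union> {f \<in> C_pm n. peak n f = Suc j} \<times> {True}"
    then show "z \<in> split_pairs n j"
    proof
      assume "z \<in> {f \<in> C_pm n. peak n f = j} \<times> {False}"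
      then obtain f where "z = (f, False)" "f \<in> C_pm n" "peak n f = j" by blast
      then show ?thesis using card_not_peak_split[of f n False] n_pos unfolding split_pairs_def by simp
    next
      assume "z \<in> {f \<in> C_pm n. peak n f = Suc j} \<times> {True}"
      then obtain f where "z = (f, True)" "f \<in> C_pm n" "peak n f = Suc j" by blast
      then show ?thesis using card_not_peak_split[of f n True] n_pos unfolding split_pairs_def by simp
    qed
  qed
  moreover have "card ({f \<in> C_pm n. peak n f = j} \<times> {False} \<union> {f \<in> C_pm n. peak n f = Suc j} \<times> {True})
      = card {f \<in> C_pm n. peak n f = j} + card {f \<in> C_pm n. peak n f = Suc j}"
    by (subst card_Un_disjoint) (auto simp: card_cartesian_product finite_C_pm)
  ultimately show ?thesis using Lambda_eq_card_peak[OF n_pos] by simp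
qed

fun reflects :: "nat \<Rightarrow> (nat \<Rightarrow> nat) \<times> bool \<Rightarrow> (nat \<Rightarrow> nat) \<times> bool \<Rightarrow> bool" where
  "reflects n (f, c) (g, d) \<longleftrightarrow> (\<exists>r. bij_betw r {1..n} {1..n} \<and>
      (\<forall>a\<in>{1..n}. g (r a) = r (f a)) \<and>
      (\<forall>a\<in>{1..n}. peak_split n g d (r a) \<longleftrightarrow> \<not> peak_split n f c a))"

lemma card_Collect_not: "card {x \<in> {1..n}. \<not> P x} = n - card {x \<in> {1..n}. P x}"
  for n :: nat
proof -
  have "{x \<in> {1..n}. \<not> P x} = {1..n} - {x \<in> {1..n}. P x}" by auto
  moreover have "card ({1..n} - {x \<in> {1..n}. P x}) = card {1..n} - card {x \<in> {1..n}. P x}"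
    by (rule card_Diff_subset) auto
  ultimately show ?thesis by simp
qed

lemma reflects_exists:
  assumes f: "f \<in> C_pm n" and n_pos: "1 \<le> n" and n_mod_4: "n mod 4 \<noteq> 2"
    and j: "card {x \<in> {1..n}. \<not> peak_split n f c x} = j"
  shows "\<exists>y \<in> split_pairs n (n - j). reflects n (f, c) y"
proof -
  interpret unimodal_reflection n f "peak_split n f c"
    using f n_pos n_mod_4 unimodal_split_peak_split
    by unfold_locales (auto simp: C_pm_def)
  obtain q M r where q: "cyclic_perm n q" "unimodal_split n q M" and r: "bij_betw r {1..n} {1..n}"
    and conj: "\<forall>a\<in>{1..n}. q (r a) = r (f a)" and label: "\<forall>a\<in>{1..n}. M (r a) \<longleftrightarrow> \<not> peak_split n f c a"
    using exists_reflected_cycle by blast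
  have q_perm: "q permutes {1..n}" using q(1) unfolding cyclic_perm_def by simp
  define d where "d = M (peak n q)"
  have r_in: "r a \<in> {1..n}" if "a \<in> {1..n}" for a using r that unfolding bij_betw_def by auto
  have label_d: "\<forall>a\<in>{1..n}. peak_split n q d (r a) \<longleftrightarrow> \<not> peak_split n f c a"
  proof
    fix a assume a: "a \<in> {1..n}"
    have "M (r a) = peak_split n q d (r a)"
      using unimodal_split_eq_peak_split[OF q_perm n_pos q(2) r_in[OF a]] unfolding d_def .
    then show "peak_split n q d (r a) \<longleftrightarrow> \<not> peak_split n f c a" using label a by simp
  qed
  have "{y \<in> {1..n}. \<not> peak_split n q d y} = r ` {a \<in> {1..n}. peak_split n f c a}"
  proof (intro equalityI subsetI)
    fix y assume y: "y \<in> {y \<in> {1..n}. \<not> peak_split n q d y}"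
    then have "y \<in> r ` {1..n}" using r by (simp add: bij_betw_def)
    then obtain a where "a \<in> {1..n}" "y = r a" by blast
    then show "y \<in> r ` {a \<in> {1..n}. peak_split n f c a}" using y label_d by auto
  qed (use label_d r_in in auto)
  moreover have "inj_on r {a \<in> {1..n}. peak_split n f c a}"
    using r unfolding bij_betw_def by (auto intro: inj_on_subset)
  ultimately have "card {y \<in> {1..n}. \<not> peak_split n q d y} = card {a \<in> {1..n}. peak_split n f c a}"
    by (simp add: card_image)
  then have "card {y \<in> {1..n}. \<not> peak_split n q d y} = n - j"
    using card_Collect_not[of n "\<lambda>x. \<not> peak_split n f c x"] j by simp
  then have "(q, d) \<in> split_pairs n (n - j)"
    unfolding split_pairs_def using unimodal_split_imp_C_pm[OF q(1) n_pos q(2)] by simp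
  moreover have "reflects n (f, c) (q, d)" using r conj label_d by auto
  ultimately show ?thesis by blast
qed

lemma reflects_conjugate:
  assumes f2: "f2 \<in> C_pm n"
    and refl1: "reflects n (f1, c1) y" and refl2: "reflects n (f2, c2) y"
  obtains rho where "bij_betw rho {1..n} {1..n}" "\<And>a. a \<in> {1..n} \<Longrightarrow> f2 (rho a) = rho (f1 a)"
    "\<And>a. a \<in> {1..n} \<Longrightarrow> peak_split n f2 c2 (rho a) \<longleftrightarrow> peak_split n f1 c1 a"
proof -
  obtain g d where y: "y = (g, d)" by (cases y)
  obtain r1 where r1: "bij_betw r1 {1..n} {1..n}" "\<forall>a\<in>{1..n}. g (r1 a) = r1 (f1 a)"
      "\<forall>a\<in>{1..n}. peak_split n g d (r1 a) \<longleftrightarrow> \<not> peak_split n f1 c1 a"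
    using refl1 unfolding y by auto
  obtain r2 where r2: "bij_betw r2 {1..n} {1..n}" "\<forall>a\<in>{1..n}. g (r2 a) = r2 (f2 a)"
      "\<forall>a\<in>{1..n}. peak_split n g d (r2 a) \<longleftrightarrow> \<not> peak_split n f2 c2 a"
    using refl2 unfolding y by auto
  define s where "s = the_inv_into {1..n} r2"
  have s: "\<And>b. b \<in> {1..n} \<Longrightarrow> s (r2 b) = b" "\<And>z. z \<in> {1..n} \<Longrightarrow> s z \<in> {1..n} \<and> r2 (s z) = z"
    using bij_betw_the_inv_into[OF r2(1)] the_inv_into_f_f[OF bij_betw_imp_inj_on[OF r2(1)]]
      f_the_inv_into_f_bij_betw[OF r2(1)]
    unfolding s_def bij_betw_def by auto
  show ?thesis
  proof (rule that[of "s \<circ> r1"])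
    show "bij_betw (s \<circ> r1) {1..n} {1..n}"
      using bij_betw_trans[OF r1(1) bij_betw_the_inv_into[OF r2(1)]] unfolding s_def .
    fix a assume a: "a \<in> {1..n}"
    define b where "b = s (r1 a)"
    have "r1 a \<in> {1..n}" using r1(1) a unfolding bij_betw_def by auto
    then have b: "b \<in> {1..n}" "r2 b = r1 a" using s(2) unfolding b_def by auto
    have "r2 (f2 b) = g (r2 b)" using r2(2) b(1) by simp
    also have "\<dots> = r1 (f1 a)" using r1(2) a b(2) by simp
    finally have "s (r2 (f2 b)) = s (r1 (f1 a))" by simp
    moreover have "f2 b \<in> {1..n}" using permutes_in_image[OF C_pm_permutes[OF f2]] b(1) by blast
    ultimately show "f2 ((s \<circ> r1) a) = (s \<circ> r1) (f1 a)" using s(1) b_def by simp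
    have "peak_split n f2 c2 b \<longleftrightarrow> \<not> peak_split n g d (r1 a)"
      using r2(3)[rule_format, OF b(1)] b(2) by simp
    then show "peak_split n f2 c2 ((s \<circ> r1) a) \<longleftrightarrow> peak_split n f1 c1 a"
      using r1(3)[rule_format, OF a] b_def by simp
  qed
qed

lemma reflects_unique:
  assumes f1: "f1 \<in> C_pm n" and f2: "f2 \<in> C_pm n" and n_pos: "1 \<le> n"
    and refl1: "reflects n (f1, c1) y" and refl2: "reflects n (f2, c2) y"
  shows "(f1, c1) = (f2, c2)"
proof -
  obtain rho where rho: "bij_betw rho {1..n} {1..n}" "\<And>a. a \<in> {1..n} \<Longrightarrow> f2 (rho a) = rho (f1 a)"
    "\<And>a. a \<in> {1..n} \<Longrightarrow> peak_split n f2 c2 (rho a) \<longleftrightarrow> peak_split n f1 c1 a"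
    using reflects_conjugate[OF f2 refl1 refl2] by blast
  interpret unimodal_conjugate n f1 "peak_split n f1 c1" f2 "peak_split n f2 c2" rho
    using f1 f2 n_pos rho unimodal_split_peak_split C_pm_permutes[OF f2]
    by unfold_locales (auto simp: C_pm_def)
  have "f1 = f2"
  proof
    fix x
    show "f1 x = f2 x"
    proof (cases "x \<in> {1..n}")
      case False
      then show ?thesis
        using permutes_not_in[OF C_pm_permutes[OF f1]] permutes_not_in[OF C_pm_permutes[OF f2]] by simp
    qed (use q_eq_p in simp)
  qed
  moreover have "peak n f1 \<in> {1..n}" using peak(1)[OF C_pm_permutes[OF f1] n_pos] .
  then have "peak_split n f2 c2 (peak n f1) = peak_split n f1 c1 (peak n f1)" by (rule M_eq_L)
  then have "c1 = c2" using \<open>f1 = f2\<close> unfolding peak_split_def by simp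
  ultimately show ?thesis by simp
qed

lemma card_split_pairs_le:
  assumes n_pos: "1 \<le> n" and n_mod_4: "n mod 4 \<noteq> 2"
  shows "card (split_pairs n j) \<le> card (split_pairs n (n - j))"
proof -
  define reflect where "reflect x = (SOME y. y \<in> split_pairs n (n - j) \<and> reflects n x y)" for x
  have reflect: "reflect x \<in> split_pairs n (n - j) \<and> reflects n x (reflect x)"
    if x_in: "x \<in> split_pairs n j" for x
  proof -
    obtain f c where x: "x = (f, c)" "f \<in> C_pm n" "card {y \<in> {1..n}. \<not> peak_split n f c y} = j"
      using x_in unfolding split_pairs_def by blast
    then have "\<exists>y. y \<in> split_pairs n (n - j) \<and> reflects n x y"
      using reflects_exists[OF x(2) n_pos n_mod_4 x(3)] by blast
    then show ?thesis unfolding reflect_def by (rule someI_ex)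
  qed
  have "inj_on reflect (split_pairs n j)"
  proof (rule inj_onI)
    fix x1 x2 assume x1: "x1 \<in> split_pairs n j" and x2: "x2 \<in> split_pairs n j"
      and eq: "reflect x1 = reflect x2"
    obtain f1 c1 where "x1 = (f1, c1)" "f1 \<in> C_pm n" using x1 unfolding split_pairs_def by blast
    moreover obtain f2 c2 where "x2 = (f2, c2)" "f2 \<in> C_pm n" using x2 unfolding split_pairs_def by blast
    ultimately show "x1 = x2" using reflects_unique n_pos reflect[OF x1] reflect[OF x2] eq by metis
  qed
  moreover have "reflect ` split_pairs n j \<subseteq> split_pairs n (n - j)" using reflect by blast
  moreover have "finite (split_pairs n (n - j))"
    using finite_subset[of "split_pairs n (n - j)" "C_pm n \<times> UNIV"] finite_C_pm
    unfolding split_pairs_def by auto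
  ultimately show ?thesis by (rule card_inj_on_le)
qed

lemma Lambda_eq_0:
  assumes "1 \<le> n" "i \<notin> {1..n}"
  shows "Lambda n i = 0"
proof -
  have "{f \<in> C_pm n. peak n f = i} = {}" using peak(1)[OF C_pm_permutes assms(1)] assms(2) by blast
  then show ?thesis unfolding Lambda_eq_card_peak[OF assms(1)] by (simp only: card.empty)
qed

lemma Lambda_sym:
  assumes n_pos: "1 \<le> n" and n_mod_4: "n mod 4 \<noteq> 2"
  shows "i \<le> n + 1 \<Longrightarrow> Lambda n i = Lambda n (n + 1 - i)"
proof (induction i)
  case 0
  then show ?case using Lambda_eq_0[OF n_pos] by simp
next
  case (Suc i)
  have "card (split_pairs n i) = card (split_pairs n (n - i))"
    using card_split_pairs_le[OF n_pos n_mod_4, of i] card_split_pairs_le[OF n_pos n_mod_4, of "n - i"]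
      Suc.prems by simp
  then have "Lambda n i + Lambda n (Suc i) = Lambda n (n - i) + Lambda n (n + 1 - i)"
    using card_split_pairs[OF n_pos] Suc.prems by (simp add: Suc_diff_le)
  then show ?case using Suc by simp
qed

theorem lemma4p3:
  fixes n i :: nat
  assumes "n \<ge> 1" and "n mod 4 \<noteq> 2" and "i \<in> {1..n}"
  shows "Lambda n i = Lambda n (n - i + 1)"
  using Lambda_sym[OF assms(1,2), of i] assms(3) by (simp add: Suc_diff_le)

end
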